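(* Let $\mathcal H$, $V_0$ (bounded self-adjoint positive definite with bounded inverse), $\sigma>0$, $\lambda>0$, and $C:\mathcal H\to\mathbb R^k$ with $CC^\top$ invertible. Let $X:\mathcal H\to\mathbb R^t$ satisfy $X=ZC+JV_0^{1/2}$ with $Z\in\mathbb R^{t\times k}$ and $J:\mathcal H\to\mathbb R^t$ such that $CV_0^{-1/2}J^\top=0$. Let $W_\lambda=\sigma^{-2}\big(C(X^\top X+\sigma^2\lambda V_0)^{-1}C^\top\big)^{-1}$, $S=(CV_0^{-1}C^\top)^{-1}$ and $\Omega_\lambda=\sigma^{-2}Z^\top Z+\lambda S$. Then $W_\lambda\preceq\Omega_\lambda$ in the Loewner order.
   Context: $\preceq$ is the Loewner order on symmetric matrices; $\cdot^\top$ the adjoint. *)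

theory Defs
  imports "HOL-Analysis.Analysis"
begin

definition selfadjoint_op :: "('h::real_inner \<Rightarrow> 'h) \<Rightarrow> bool" where
  "selfadjoint_op T \<longleftrightarrow> (\<forall>x y. inner (T x) y = inner x (T y))"

definition posdef_op :: "('h::real_inner \<Rightarrow> 'h) \<Rightarrow> bool" where
  "posdef_op T \<longleftrightarrow> (\<forall>x. x \<noteq> 0 \<longrightarrow> 0 < inner x (T x))"

definition is_pos_sqrt :: "('h::real_inner \<Rightarrow> 'h) \<Rightarrow> ('h \<Rightarrow> 'h) \<Rightarrow> bool" where
  "is_pos_sqrt R V \<longleftrightarrow> bounded_linear R \<and> selfadjoint_op R \<and>
      (\<forall>x. 0 \<le> inner x (R x)) \<and> (\<forall>x. R (R x) = V x)"

definition loewner_le :: "real^'k^'k \<Rightarrow> real^'k^'k \<Rightarrow> bool" where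
  "loewner_le A B \<longleftrightarrow> (\<forall>v. v \<bullet> (A *v v) \<le> v \<bullet> (B *v v))"

end

(*
  For a bounded positive definite A and C with C C\<^sup>T invertible,
  v \<bullet> (C A\<inverse> C\<^sup>T)\<inverse> v is the minimum of h \<bullet> A h over all h with C h = v,
  attained at h = A\<inverse> C\<^sup>T (C A\<inverse> C\<^sup>T)\<inverse> v.  Apply this to A = X\<^sup>T X + \<sigma>\<^sup>2\<lambda> V\<^sub>0 and test it with the
  minimiser h of the corresponding problem for V\<^sub>0 alone: h lies in the range of V\<^sub>0\<inverse> C\<^sup>T,
  which the hypothesis C V\<^sub>0^(-1/2) J\<^sup>T = 0 makes orthogonal to J V\<^sub>0^(1/2), so X h = Z v and
  h \<bullet> A h = |Z v|\<^sup>2 + \<sigma>\<^sup>2\<lambda> v \<bullet> S v.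
  Adjoints of bounded maps from a Hilbert space into \<real>\<^sup>n exist by the Riesz representation
  theorem, proved via the minimal-norm point of a closed affine hyperplane.
*)

theory Submission
  imports Defs
begin

lemma inner_eq_0_if_norm_le_add_scaleR:
  fixes x z :: "'a::real_inner"
  assumes "\<And>t. norm x \<le> norm (x + t *\<^sub>R z)"
  shows "z \<bullet> x = 0"
proof (cases "z = 0")
  case False
  define a where "a = z \<bullet> x"
  define b where "b = z \<bullet> z"
  have b: "b > 0" using False by (simp add: b_def)
  have "norm x \<le> norm (x + (- a / b) *\<^sub>R z)" by (rule assms)
  then have "(norm x)\<^sup>2 \<le> (norm (x + (- a / b) *\<^sub>R z))\<^sup>2"
    by (intro power_mono) auto
  also have "\<dots> = (norm x)\<^sup>2 + 2 * (- a / b) * a + (- a / b)\<^sup>2 * b"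
    unfolding power2_norm_eq_inner a_def b_def
    by (simp add: inner_add_left inner_add_right inner_commute power2_eq_square algebra_simps)
  also have "\<dots> = (norm x)\<^sup>2 - a\<^sup>2 / b"
    using b by (simp add: power2_eq_square field_simps)
  finally have "a\<^sup>2 / b \<le> 0" by simp
  with b show ?thesis by (simp add: a_def divide_le_0_iff)
qed simp

lemma Cauchy_if_midpoint_norm_ge:
  fixes xs :: "nat \<Rightarrow> 'a::real_inner"
  assumes d: "0 \<le> d"
    and mid: "\<And>m n. 2 * d \<le> norm (xs m + xs n)"
    and near: "\<And>n. norm (xs n) < d + 1 / (real n + 1)"
  shows "Cauchy xs"
proof (rule metric_CauchyI)
  fix eps :: real assume eps: "0 < eps"
  define e where "e n = (2 * d + 1) / (real n + 1)" for n
  have sq: "(norm (xs n))\<^sup>2 \<le> d\<^sup>2 + e n" for n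
  proof -
    have "(norm (xs n))\<^sup>2 \<le> (d + 1 / (real n + 1))\<^sup>2"
      using near[of n] by (intro power_mono) auto
    also have "\<dots> = d\<^sup>2 + 2 * d / (real n + 1) + 1 / (real n + 1)\<^sup>2"
      by (simp add: power2_sum power_divide)
    also have "1 / (real n + 1)\<^sup>2 \<le> 1 / (real n + 1)"
      by (simp add: divide_simps power2_eq_square)
    then have "d\<^sup>2 + 2 * d / (real n + 1) + 1 / (real n + 1)\<^sup>2 \<le> d\<^sup>2 + e n"
      by (simp add: e_def add_divide_distrib)
    finally show ?thesis .
  qed
  have diff: "(norm (xs m - xs n))\<^sup>2 \<le> 2 * e m + 2 * e n" for m n
  proof -
    have "(norm (xs m - xs n))\<^sup>2 + (norm (xs m + xs n))\<^sup>2 = 2 * (norm (xs m))\<^sup>2 + 2 * (norm (xs n))\<^sup>2"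
      by (simp add: power2_norm_eq_inner inner_diff inner_add inner_commute)
    moreover have "(2 * d)\<^sup>2 \<le> (norm (xs m + xs n))\<^sup>2"
      using mid d by (intro power_mono) auto
    ultimately show ?thesis using sq[of m] sq[of n] by (simp add: power2_eq_square)
  qed
  obtain N :: nat where N: "4 * (2 * d + 1) / eps\<^sup>2 < real N"
    using reals_Archimedean2 by blast
  have eN: "e n < eps\<^sup>2 / 4" if "N \<le> n" for n
  proof -
    have "4 * (2 * d + 1) < eps\<^sup>2 * real N" using N eps by (simp add: field_simps)
    also have "\<dots> \<le> eps\<^sup>2 * (real n + 1)" using that by (intro mult_left_mono) auto
    finally show ?thesis by (simp add: e_def field_simps)
  qed
  have "dist (xs m) (xs n) < eps" if "N \<le> m" "N \<le> n" for m n
  proof -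
    have "(norm (xs m - xs n))\<^sup>2 < eps\<^sup>2"
      using diff[of m n] eN[OF that(1)] eN[OF that(2)] by linarith
    with eps show ?thesis by (simp add: dist_norm power2_less_imp_less)
  qed
  then show "\<exists>M. \<forall>m\<ge>M. \<forall>n\<ge>M. dist (xs m) (xs n) < eps" by blast
qed

lemma closed_convex_has_min_norm:
  fixes S :: "'a::{real_inner,complete_space} set"
  assumes "closed S" "convex S" "S \<noteq> {}"
  obtains x where "x \<in> S" "\<And>y. y \<in> S \<Longrightarrow> norm x \<le> norm y"
proof -
  define d where "d = Inf (norm ` S)"
  have bdd: "bdd_below (norm ` S)" by (rule bdd_belowI[of _ 0]) auto
  have d_le: "d \<le> norm y" if "y \<in> S" for y
    unfolding d_def using bdd that by (intro cInf_lower) auto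
  have d0: "0 \<le> d" unfolding d_def using assms(3) by (intro cInf_greatest) auto
  have "\<exists>x\<in>S. norm x < d + 1 / (real n + 1)" for n
  proof -
    have "Inf (norm ` S) < d + 1 / (real n + 1)" unfolding d_def by (simp add: add_pos_pos)
    then show ?thesis using assms(3) by (subst (asm) cInf_less_iff) (auto simp: bdd)
  qed
  then obtain xs where xs: "\<And>n. xs n \<in> S" and near: "\<And>n. norm (xs n) < d + 1 / (real n + 1)"
    by metis
  have "d \<le> norm ((1/2) *\<^sub>R (xs m + xs n))" for m n
    using convexD[OF assms(2) xs xs, of "1/2" "1/2"] d_le by (simp add: scaleR_add_right)
  then have "2 * d \<le> norm (xs m + xs n)" for m n
    by (simp add: mult.commute)
  then have "Cauchy xs" using Cauchy_if_midpoint_norm_ge[OF d0 _ near] by blast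
  then obtain x where lim: "xs \<longlonglongrightarrow> x" using Cauchy_convergent convergent_def by blast
  have "x \<in> S" using closed_sequentially[OF assms(1) xs lim] .
  moreover have "norm x \<le> d"
  proof (rule LIMSEQ_le[OF tendsto_norm[OF lim]])
    show "(\<lambda>n. d + 1 / (real n + 1)) \<longlonglongrightarrow> d"
      using tendsto_add[OF tendsto_const[of d] LIMSEQ_inverse_real_of_nat]
      by (simp add: inverse_eq_divide add.commute)
  qed (auto intro: less_imp_le near)
  ultimately show ?thesis using that d_le by force
qed

lemma riesz_representation:
  fixes f :: "'a::{real_inner,complete_space} \<Rightarrow> real"
  assumes "bounded_linear f"
  obtains w where "\<And>x. f x = x \<bullet> w"
proof (cases "\<forall>x. f x = 0")
  case True
  then show ?thesis using that[of 0] by simp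
next
  case False
  interpret f: bounded_linear f by fact
  define S where "S = {x. f x = 1}"
  from False obtain x1 where "f x1 \<noteq> 0" by blast
  then have "x1 /\<^sub>R f x1 \<in> S" by (simp add: S_def f.scaleR)
  moreover have "closed S"
    unfolding S_def by (intro closed_Collect_eq continuous_on_const linear_continuous_on assms)
  moreover have "convex S"
    by (auto simp: convex_def S_def f.add f.scaleR)
  ultimately obtain x0 where "x0 \<in> S" and x0_min: "\<And>y. y \<in> S \<Longrightarrow> norm x0 \<le> norm y"
    using closed_convex_has_min_norm by blast
  then have fx0: "f x0 = 1" by (simp add: S_def)
  have orth: "z \<bullet> x0 = 0" if "f z = 0" for z
    using that fx0 by (intro inner_eq_0_if_norm_le_add_scaleR x0_min) (simp add: S_def f.add f.scaleR)
  have "f x = x \<bullet> (x0 /\<^sub>R (x0 \<bullet> x0))" for x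
  proof -
    have "(x - f x *\<^sub>R x0) \<bullet> x0 = 0" by (intro orth) (simp add: f.diff f.scaleR fx0)
    moreover have "x0 \<noteq> 0" using fx0 by auto
    ultimately show ?thesis by (simp add: inner_diff_left field_simps)
  qed
  then show ?thesis by (rule that)
qed

lemma bounded_linear_adjoint_works:
  fixes f :: "'a::{real_inner,complete_space} \<Rightarrow> 'b::euclidean_space"
  assumes "bounded_linear f"
  shows "x \<bullet> adjoint f y = f x \<bullet> y"
proof -
  have "\<exists>w. \<forall>x. f x \<bullet> i = x \<bullet> w" for i
    using riesz_representation[OF bounded_linear_inner_left_comp[OF assms]] by metis
  then obtain W where W: "\<And>i x. f x \<bullet> i = x \<bullet> W i" by metis
  have "f x \<bullet> y = x \<bullet> (\<Sum>i\<in>Basis. (y \<bullet> i) *\<^sub>R W i)" for x y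
  proof -
    have "f x \<bullet> y = (\<Sum>i\<in>Basis. (y \<bullet> i) * (f x \<bullet> i))"
      by (subst euclidean_representation[of y, symmetric]) (simp add: inner_sum_right)
    then show ?thesis by (simp add: W inner_sum_right)
  qed
  then have "\<forall>y. \<exists>w. \<forall>x. f x \<bullet> y = x \<bullet> w" by blast
  then show ?thesis
    unfolding adjoint_def choice_iff
    by (intro someI2_ex[where Q="\<lambda>f'. x \<bullet> f' y = f x \<bullet> y"]) auto
qed

lemma bounded_linear_adjoint_linear:
  fixes f :: "'a::{real_inner,complete_space} \<Rightarrow> 'b::euclidean_space"
  assumes "bounded_linear f"
  shows "linear (adjoint f)"
proof (rule linearI)
  note adj = bounded_linear_adjoint_works[OF assms]
  show "adjoint f (a + b) = adjoint f a + adjoint f b" for a b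
    by (rule vector_eq_ldot[THEN iffD1]) (simp add: adj inner_add_right)
  show "adjoint f (r *\<^sub>R a) = r *\<^sub>R adjoint f a" for r a
    by (rule vector_eq_ldot[THEN iffD1]) (simp add: adj)
qed

lemma bij_linear_imp_inv_linear: "linear f \<Longrightarrow> bij f \<Longrightarrow> linear (inv f)"
  using bij_module_hom_imp_inv_module_hom[of scaleR scaleR f] by (simp add: module_hom_iff_linear linear_def)

(* The paper's S is matrix_inv (compression C (inv V\<^sub>0)). *)
definition compression :: "('a::real_inner \<Rightarrow> real^'k) \<Rightarrow> ('a \<Rightarrow> 'a) \<Rightarrow> real^'k^'k"
  where "compression C B = matrix (C \<circ> B \<circ> adjoint C)"

lemma matrix_inv_mult_vector:
  fixes M :: "real^'n^'n"
  assumes "invertible M"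
  shows "M *v (matrix_inv M *v v) = v"
proof -
  have "M ** matrix_inv M = mat 1"
    using assms unfolding invertible_def matrix_inv_def by (rule someI2_ex) auto
  then show ?thesis by (simp add: matrix_vector_mul_assoc)
qed

context
  fixes A :: "'a::{real_inner,complete_space} \<Rightarrow> 'a" and C :: "'a \<Rightarrow> real^'k"
  assumes A_lin: "linear A" and A_bij: "bij A" and A_sa: "selfadjoint_op A" and A_pd: "posdef_op A"
    and C_bl: "bounded_linear C" and CCt_inv: "invertible (matrix (C \<circ> adjoint C))"
begin

private lemma adjoint_C: "x \<bullet> adjoint C y = C x \<bullet> y"
  by (rule bounded_linear_adjoint_works[OF C_bl])

private lemma A_inv: "A (inv A y) = y"
  using A_bij by (simp add: bij_is_surj surj_f_inv_f)

private lemma compression_inv_apply: "compression C (inv A) *v u = C (inv A (adjoint C u))"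
proof -
  have "linear (C \<circ> inv A \<circ> adjoint C)"
    using bounded_linear_adjoint_linear[OF C_bl] bij_linear_imp_inv_linear[OF A_lin A_bij]
      bounded_linear.linear[OF C_bl] by (intro linear_compose)
  then show ?thesis by (simp add: compression_def matrix_works)
qed

private lemma adjoint_C_eq_0:
  assumes "adjoint C u = 0"
  shows "u = 0"
proof -
  have "linear (C \<circ> adjoint C)"
    using bounded_linear_adjoint_linear[OF C_bl] bounded_linear.linear[OF C_bl] by (rule linear_compose)
  then have "matrix (C \<circ> adjoint C) *v u = 0"
    using assms by (simp add: matrix_works bounded_linear.linear[OF C_bl] linear_0)
  then show ?thesis
    using CCt_inv by (simp add: invertible_left_inverse matrix_left_invertible_ker)
qed

lemma invertible_compression_inv: "invertible (compression C (inv A))"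
  unfolding invertible_left_inverse matrix_left_invertible_ker
proof (intro allI impI)
  fix u assume "compression C (inv A) *v u = 0"
  define g where "g = inv A (adjoint C u)"
  have "g \<bullet> A g = C g \<bullet> u" by (simp add: g_def A_inv adjoint_C)
  also have "\<dots> = 0" using \<open>compression C (inv A) *v u = 0\<close> by (simp add: compression_inv_apply g_def)
  finally have "g = 0" using A_pd by (auto simp: posdef_op_def)
  then have "adjoint C u = 0" using A_inv[of "adjoint C u"] linear_0[OF A_lin] by (simp add: g_def)
  then show "u = 0" by (rule adjoint_C_eq_0)
qed

lemma compression_inv_minimizer:
  fixes v :: "real^'k"
  defines "g \<equiv> inv A (adjoint C (matrix_inv (compression C (inv A)) *v v))"
  shows "C g = v" and "g \<bullet> A g = v \<bullet> (matrix_inv (compression C (inv A)) *v v)"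
proof -
  show Cg: "C g = v"
    using matrix_inv_mult_vector[OF invertible_compression_inv, of v]
    by (simp add: compression_inv_apply g_def)
  show "g \<bullet> A g = v \<bullet> (matrix_inv (compression C (inv A)) *v v)"
    by (simp add: g_def A_inv adjoint_C) (simp add: Cg[unfolded g_def])
qed

lemma compression_inv_quadratic_le: "C h \<bullet> (matrix_inv (compression C (inv A)) *v C h) \<le> h \<bullet> A h"
proof -
  define u where "u = matrix_inv (compression C (inv A)) *v C h"
  define g where "g = inv A (adjoint C u)"
  have Cg: "C g = C h" and gAg: "g \<bullet> A g = C h \<bullet> u"
    using compression_inv_minimizer[of "C h"] by (simp_all add: g_def u_def)
  have hAg: "h \<bullet> A g = C h \<bullet> u" by (simp add: g_def A_inv adjoint_C)
  have "0 \<le> (h - g) \<bullet> A (h - g)"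
    using A_pd by (cases "h = g") (auto simp: posdef_op_def less_imp_le)
  also have "\<dots> = h \<bullet> A h - h \<bullet> A g - g \<bullet> A h + g \<bullet> A g"
    by (simp add: linear_diff[OF A_lin] inner_diff_left inner_diff_right)
  also have "\<dots> = h \<bullet> A h - C h \<bullet> u"
    using A_sa hAg gAg by (simp add: selfadjoint_op_def inner_commute)
  finally show ?thesis by (simp add: u_def)
qed

end

lemma posdef_op_imp_inj: "linear A \<Longrightarrow> posdef_op A \<Longrightarrow> inj A"
  by (auto simp: linear_inj_iff_eq_0 posdef_op_def)

context
  fixes X :: "'a::{real_inner,complete_space} \<Rightarrow> 'b::euclidean_space" and V :: "'a \<Rightarrow> 'a" and c :: real
  assumes X_bl: "bounded_linear X" and V_lin: "linear V" and V_pd: "posdef_op V" and c_pos: "c > 0"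
begin

private lemma adjoint_X: "x \<bullet> adjoint X y = X x \<bullet> y"
  by (rule bounded_linear_adjoint_works[OF X_bl])

lemma linear_adjoint_comp_plus: "linear (\<lambda>h. adjoint X (X h) + c *\<^sub>R V h)"
  using bounded_linear_adjoint_linear[OF X_bl] bounded_linear.linear[OF X_bl] V_lin
  by (intro linear_compose_add linear_compose[of X "adjoint X", unfolded o_def]
      linear_compose_scale_right)

lemma selfadjoint_adjoint_comp_plus:
  "selfadjoint_op V \<Longrightarrow> selfadjoint_op (\<lambda>h. adjoint X (X h) + c *\<^sub>R V h)"
  by (simp add: selfadjoint_op_def inner_add_left inner_add_right adjoint_X inner_commute)

lemma posdef_adjoint_comp_plus: "posdef_op (\<lambda>h. adjoint X (X h) + c *\<^sub>R V h)"
  using V_pd c_pos by (auto simp: posdef_op_def inner_add_right adjoint_X add_nonneg_pos)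

lemma surj_adjoint_comp_plus:
  assumes V_bij: "bij V"
  shows "surj (\<lambda>h. adjoint X (X h) + c *\<^sub>R V h)"
proof -
  define Vi where "Vi = inv V"
  have Vi: "V (Vi y) = y" for y using V_bij by (simp add: Vi_def bij_is_surj surj_f_inv_f)
  have Vi_lin: "linear Vi" unfolding Vi_def by (rule bij_linear_imp_inv_linear[OF V_lin V_bij])
  (* Woodbury: A h = y is solved by h = V\<inverse> (y - X\<^sup>T w) / c once w solves T w = X (V\<inverse> y),
     a finite-dimensional system whose operator is injective. *)
  define T where "T w = c *\<^sub>R w + X (Vi (adjoint X w))" for w
  have "linear (X \<circ> Vi \<circ> adjoint X)"
    using bounded_linear_adjoint_linear[OF X_bl] bounded_linear.linear[OF X_bl] Vi_lin
    by (intro linear_compose)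
  then have T_lin: "linear T"
    unfolding T_def[abs_def] o_def by (intro linear_compose_add linear_compose_scale_right linear_ident)
  have "w = 0" if "T w = 0" for w
  proof -
    define q where "q = Vi (adjoint X w)"
    have "w \<bullet> X q = q \<bullet> V q" by (simp add: q_def Vi inner_commute[of w] flip: adjoint_X)
    then have "0 \<le> w \<bullet> X q" using V_pd by (cases "q = 0") (auto simp: posdef_op_def less_imp_le)
    moreover have "c * (w \<bullet> w) + w \<bullet> X q = 0"
    proof -
      have "w \<bullet> T w = 0" using that by simp
      then show ?thesis by (simp add: T_def q_def inner_add_right)
    qed
    ultimately have "c * (w \<bullet> w) \<le> 0" by linarith
    with c_pos have "w \<bullet> w \<le> 0" by (simp add: mult_le_0_iff)
    then show "w = 0" by (metis inner_eq_zero_iff inner_ge_zero order_antisym)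
  qed
  then have "surj T"
    using T_lin by (intro linear_injective_imp_surjective) (auto simp: linear_inj_iff_eq_0)
  show ?thesis unfolding surj_def
  proof
    fix y
    obtain w where w: "T w = X (Vi y)" using \<open>surj T\<close> by (metis surjD)
    define h where "h = Vi ((1 / c) *\<^sub>R (y - adjoint X w))"
    have "X h = (1 / c) *\<^sub>R (X (Vi y) - X (Vi (adjoint X w)))"
      using Vi_lin bounded_linear.linear[OF X_bl]
      by (simp add: h_def linear_diff linear_scale)
    also have "\<dots> = w"
    proof -
      have "X (Vi y) - X (Vi (adjoint X w)) = c *\<^sub>R w" by (simp add: T_def flip: w)
      then show ?thesis using c_pos by simp
    qed
    finally have "adjoint X (X h) + c *\<^sub>R V h = y" using c_pos by (simp add: h_def Vi)
    then show "\<exists>h. y = adjoint X (X h) + c *\<^sub>R V h" by metis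
  qed
qed

lemma bij_adjoint_comp_plus: "bij V \<Longrightarrow> bij (\<lambda>h. adjoint X (X h) + c *\<^sub>R V h)"
  using posdef_op_imp_inj[OF linear_adjoint_comp_plus posdef_adjoint_comp_plus] surj_adjoint_comp_plus
  by (simp add: bij_def)

end

lemma pos_sqrt_orthogonal_transfer:
  fixes R V :: "'a::{real_inner,complete_space} \<Rightarrow> 'a"
    and C :: "'a \<Rightarrow> 'c::euclidean_space" and J :: "'a \<Rightarrow> 'b::euclidean_space"
  assumes R: "is_pos_sqrt R V" and V: "bij V" "selfadjoint_op V"
    and C_bl: "bounded_linear C" and J_bl: "bounded_linear J"
    and orth: "\<And>y. C (inv R (adjoint J y)) = 0"
  shows "J (R (inv V (adjoint C s))) = 0"
proof -
  define h where "h = inv V (adjoint C s)"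
  have Vh: "V h = adjoint C s" using V by (simp add: h_def bij_is_surj surj_f_inv_f)
  have RR: "R (R x) = V x" for x using R by (simp add: is_pos_sqrt_def)
  have "surj R" using V by (intro surjI[of R "\<lambda>y. R (inv V y)"]) (simp add: RR bij_is_surj surj_f_inv_f)
  have "J (R h) \<bullet> y = 0" for y
  proof -
    define p where "p = inv R (adjoint J y)"
    have Rp: "R p = adjoint J y" using \<open>surj R\<close> by (simp add: p_def surj_f_inv_f)
    have "J (R h) \<bullet> y = R h \<bullet> R p" by (simp add: Rp bounded_linear_adjoint_works[OF J_bl])
    also have "\<dots> = V h \<bullet> p"
      using R V(2) by (simp add: is_pos_sqrt_def selfadjoint_op_def RR[symmetric])
    also have "\<dots> = C p \<bullet> s" by (simp add: Vh bounded_linear_adjoint_works[OF C_bl] inner_commute)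
    finally show ?thesis by (simp add: p_def orth)
  qed
  then have "J (R h) \<bullet> J (R h) = 0" by blast
  then show ?thesis by (simp add: h_def)
qed

theorem lemmaC1:
  fixes V0 R :: "'h::{real_inner,complete_space} \<Rightarrow> 'h"
    and C :: "'h \<Rightarrow> real^'k"
    and X J :: "'h \<Rightarrow> real^'t"
    and Z :: "real^'k^'t"
    and sig lam :: real
  assumes V0_bl: "bounded_linear V0"
    and V0_sa: "selfadjoint_op V0"
    and V0_pd: "posdef_op V0"
    and V0_bij: "bij V0"
    and V0_inv_bl: "bounded_linear (inv V0)"
    and R_sqrt: "is_pos_sqrt R V0"
    and sigma_pos: "sig > 0"
    and lambda_pos: "lam > 0"
    and C_bl: "bounded_linear C"
    and CCt_inv: "invertible (matrix (C \<circ> adjoint C))"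
    and J_bl: "bounded_linear J"
    and X_def: "\<And>h. X h = Z *v C h + J (R h)"
    and orth: "\<And>y. C (inv R (adjoint J y)) = 0"
  shows "loewner_le
           ((1 / sig\<^sup>2) *\<^sub>R matrix_inv
              (matrix (C \<circ> inv (\<lambda>h. adjoint X (X h) + (sig\<^sup>2 * lam) *\<^sub>R V0 h) \<circ> adjoint C)))
           ((1 / sig\<^sup>2) *\<^sub>R (transpose Z ** Z)
              + lam *\<^sub>R matrix_inv (matrix (C \<circ> inv V0 \<circ> adjoint C)))"
proof -
  define c where "c = sig\<^sup>2 * lam"
  define A where "A = (\<lambda>h. adjoint X (X h) + c *\<^sub>R V0 h)"
  have c_pos: "c > 0" using sigma_pos lambda_pos by (simp add: c_def)
  have V0_lin: "linear V0" using V0_bl by (rule bounded_linear.linear)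
  have X_bl: "bounded_linear X"
    unfolding X_def[abs_def] using C_bl J_bl R_sqrt
    by (intro bounded_linear_add bounded_linear_compose[OF matrix_vector_mul_bounded_linear]
        bounded_linear_compose[OF J_bl]) (auto simp: is_pos_sqrt_def)
  have A: "linear A" "bij A" "selfadjoint_op A" "posdef_op A"
    using linear_adjoint_comp_plus bij_adjoint_comp_plus selfadjoint_adjoint_comp_plus
      posdef_adjoint_comp_plus X_bl V0_lin V0_pd c_pos V0_bij V0_sa by (auto simp: A_def)
  have "v \<bullet> (matrix_inv (compression C (inv A)) *v v)
      \<le> (Z *v v) \<bullet> (Z *v v) + c * (v \<bullet> (matrix_inv (compression C (inv V0)) *v v))" for v
  proof -
    define h where "h = inv V0 (adjoint C (matrix_inv (compression C (inv V0)) *v v))"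
    note h_min = compression_inv_minimizer[OF V0_lin V0_bij V0_sa V0_pd C_bl CCt_inv, of v, folded h_def]
    have "X h = Z *v v"
      using pos_sqrt_orthogonal_transfer[OF R_sqrt V0_bij V0_sa C_bl J_bl orth]
      unfolding X_def h_min(1) by (simp add: h_def)
    then have "h \<bullet> A h = (Z *v v) \<bullet> (Z *v v) + c * (v \<bullet> (matrix_inv (compression C (inv V0)) *v v))"
      by (simp add: A_def inner_add_right bounded_linear_adjoint_works[OF X_bl] h_min(2))
    then show ?thesis
      using compression_inv_quadratic_le[OF A C_bl CCt_inv, of h] by (simp add: h_min(1))
  qed
  moreover have "v \<bullet> ((transpose Z ** Z) *v v) = (Z *v v) \<bullet> (Z *v v)" for v
    by (metis dot_lmul_matrix matrix_vector_mul_assoc vector_transpose_matrix)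
  ultimately show ?thesis
    using sigma_pos unfolding loewner_le_def compression_def A_def c_def
    by (auto simp: matrix_vector_mult_add_rdistrib inner_add_right field_simps
        simp flip: scaleR_matrix_vector_assoc)
qed

end
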